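(* For all positive integers $m,n,w,d$ with $2w\le m$, $$A(m,n,w,d)\ge\sqrt{\pi wn}\;2^{-\frac{n}{2}(3+\log_2 w)}\,B(mn,nw,d).$$
   Context: $J(m,w)$ denotes the set of binary vectors of length $m$ and Hamming weight $w$. Elements of $J(m,w)^n$ are identified with $m\times n$ binary matrices all of whose columns have weight $w$, with binary Hamming distance. $A(m,n,w,d)$ is the maximum cardinality of a nonempty subset of $J(m,w)^n$ with pairwise Hamming distances at least $2d$. $B(N,W,d)$ is the maximum cardinality of a nonempty subset of $J(N,W)$ with pairwise Hamming distances at least $2d$. Here $\pi$ is the circle constant. *)

theory Defs
  imports Complex_Main
begin

definition hweight :: "bool list \<Rightarrow> nat" where
  "hweight x = length (filter id x)"

definition hdist :: "bool list \<Rightarrow> bool list \<Rightarrow> nat" where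
  "hdist x y = length (filter (\<lambda>(a,b). a \<noteq> b) (zip x y))"

definition J :: "nat \<Rightarrow> nat \<Rightarrow> bool list set" where
  "J N W = {x. length x = N \<and> hweight x = W}"

text \<open>Elements of J(m,w)^n: lists of n columns, each in J(m,w) (an m x n binary matrix,
  columns of weight w). Distance = binary Hamming distance of the matrices = sum of the
  column distances.\<close>

definition Jpow :: "nat \<Rightarrow> nat \<Rightarrow> nat \<Rightarrow> bool list list set" where
  "Jpow m w n = {M. length M = n \<and> (\<forall>c\<in>set M. c \<in> J m w)}"

definition mdist :: "bool list list \<Rightarrow> bool list list \<Rightarrow> nat" where
  "mdist M M' = (\<Sum>j<length M. hdist (M ! j) (M' ! j))"

definition A :: "nat \<Rightarrow> nat \<Rightarrow> nat \<Rightarrow> nat \<Rightarrow> nat" where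
  "A m n w d = Max {card C | C. C \<subseteq> Jpow m w n \<and> C \<noteq> {} \<and>
      (\<forall>x\<in>C. \<forall>y\<in>C. x \<noteq> y \<longrightarrow> mdist x y \<ge> 2 * d)}"

definition B :: "nat \<Rightarrow> nat \<Rightarrow> nat \<Rightarrow> nat" where
  "B N W d = Max {card C | C. C \<subseteq> J N W \<and> C \<noteq> {} \<and>
      (\<forall>x\<in>C. \<forall>y\<in>C. x \<noteq> y \<longrightarrow> hdist x y \<ge> 2 * d)}"

end

theory Submission
  imports Defs "HOL-Combinatorics.Permutations"
begin

(* Take an optimal code C in J(mn,nw) and a uniformly random permutation p of the mn coordinates.
   Every permuted codeword is uniformly distributed on J(mn,nw), so on average a fraction
   C(m,w)^n / C(mn,nw) of the permuted codewords are concatenations of n columns of length m and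
   weight w. These codewords form a code in J(m,w)^n with the same distances, hence
   A(m,n,w,d) >= B(mn,nw,d) C(m,w)^n / C(mn,nw). The ratio of binomial coefficients is then bounded
   by Stirling's formula with explicit error: the remainder ln k! - (k + 1/2) ln k + k decreases,
   while the remainder minus 1/(12k) increases, as one sees by comparing ln ((k+1)/k) with the
   series of 2 artanh (1/(2k+1)). *)

section \<open>Permuting the coordinates of constant-weight words\<close>

lemma hweight_eq_count: "hweight x = count (mset x) True"
  by (simp add: hweight_def count_mset count_list_eq_length_filter) (metis id_apply)

lemma mset_of_J:
  assumes "x \<in> J N W"
  shows "mset x = replicate_mset W True + replicate_mset (N - W) False"
proof (rule multiset_eqI)
  fix a
  have "count (mset x) True + count (mset x) False = length x"
    by (simp add: count_mset count_list_eq_length_filter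
        sum_length_filter_compl[of "(=) True" x, symmetric]) (metis (full_types))
  then show "count (mset x) a = count (replicate_mset W True + replicate_mset (N - W) False) a"
    using assms by (cases a) (auto simp: J_def hweight_eq_count)
qed

lemma permute_list_in_J:
  assumes "p permutes {..<N}" "x \<in> J N W"
  shows "permute_list p x \<in> J N W"
  using assms by (simp add: J_def hweight_eq_count)

lemma J_permute_list_transitive:
  assumes "x \<in> J N W" "y \<in> J N W"
  obtains p where "p permutes {..<N}" "permute_list p x = y"
proof -
  have "mset y = mset x" using assms by (simp add: mset_of_J)
  then show thesis using assms that by (elim mset_eq_permutation) (auto simp: J_def)
qed

lemma hdist_permute_list:
  assumes "p permutes {..<length x}" "length y = length x"
  shows "hdist (permute_list p x) (permute_list p y) = hdist x y"
proof -
  have "hdist (permute_list p x) (permute_list p y)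
      = size (filter_mset (\<lambda>(a, b). a \<noteq> b) (mset (permute_list p (zip x y))))"
    using assms by (simp add: hdist_def permute_list_zip flip: mset_filter)
  also have "\<dots> = hdist x y"
    using assms by (simp add: hdist_def flip: mset_filter)
  finally show ?thesis .
qed

lemma permute_list_inv_cancel:
  assumes "p permutes {..<length x}"
  shows "permute_list (inv p) (permute_list p x) = x"
  using assms by (simp flip: permute_list_compose add: permutes_inv permutes_inv_o)

lemma permute_list_cancel_inv:
  assumes "p permutes {..<length x}"
  shows "permute_list p (permute_list (inv p) x) = x"
  using assms by (simp flip: permute_list_compose add: permutes_inv_o)

lemma inj_on_permute_list:
  assumes "p permutes {..<N}"
  shows "inj_on (permute_list p) {x. length x = N}"
  using assms by (intro inj_on_inverseI[where g = "permute_list (inv p)"])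
    (auto simp: permute_list_inv_cancel)

lemma finite_J: "finite (J N W)"
  using finite_lists_length_eq[of "UNIV :: bool set" N] by (rule finite_subset[rotated]) (auto simp: J_def)

lemma card_J: "card (J N W) = N choose W"
proof -
  have "bij_betw (\<lambda>x. {i. i < N \<and> x ! i}) (J N W) {T. T \<subseteq> {..<N} \<and> card T = W}"
  proof (rule bij_betw_byWitness[where f' = "\<lambda>T. map (\<lambda>i. i \<in> T) [0..<N]"])
    show "\<forall>x\<in>J N W. map (\<lambda>i. i \<in> {i. i < N \<and> x ! i}) [0..<N] = x"
      by (auto simp: J_def intro!: nth_equalityI)
    show "(\<lambda>x. {i. i < N \<and> x ! i}) ` J N W \<subseteq> {T. T \<subseteq> {..<N} \<and> card T = W}"
      by (auto simp: J_def hweight_def length_filter_conv_card)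
  qed (auto simp: J_def hweight_def length_filter_conv_card subset_eq intro!: arg_cong[where f = card])
  then show ?thesis
    by (simp add: bij_betw_same_card n_subsets)
qed

lemma sum_card_filter_swap:
  assumes "finite X" "finite Y"
  shows "(\<Sum>x\<in>X. card {y\<in>Y. P x y}) = (\<Sum>y\<in>Y. card {x\<in>X. P x y})"
proof -
  have "card {y\<in>Y. P x y} = (\<Sum>y\<in>Y. if P x y then 1 else 0)" for x
    using assms by (simp add: sum.If_cases Int_def)
  moreover have "card {x\<in>X. P x y} = (\<Sum>x\<in>X. if P x y then 1 else 0)" for y
    using assms by (simp add: sum.If_cases Int_def)
  ultimately show ?thesis
    using sum.swap[where g = "\<lambda>x y. if P x y then 1 else (0::nat)" and A = X and B = Y] by simp
qed

lemma card_permutations_hitting_le: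
  assumes "c \<in> J N W" "c' \<in> J N W"
  shows "card {p. p permutes {..<N} \<and> permute_list p c \<in> S}
    \<le> card {p. p permutes {..<N} \<and> permute_list p c' \<in> S}"
proof -
  obtain r where r: "r permutes {..<N}" "permute_list r c' = c"
    using J_permute_list_transitive[OF assms(2,1)] .
  have "length c' = N" using assms(2) by (simp add: J_def)
  then have "(\<circ>) r ` {p. p permutes {..<N} \<and> permute_list p c \<in> S}
      \<subseteq> {p. p permutes {..<N} \<and> permute_list p c' \<in> S}"
    using r by (auto simp: permute_list_compose permutes_compose)
  moreover have "inj ((\<circ>) r)"
    using permutes_inj[OF r(1)] by (auto simp: inj_def fun_eq_iff)
  moreover have "finite {p. p permutes {..<N} \<and> permute_list p c' \<in> S}"
    using finite_permutations[of "{..<N}"] by (rule finite_subset[rotated]) auto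
  ultimately show ?thesis
    by (meson card_inj_on_le inj_on_subset subset_UNIV)
qed

lemma card_permute_list_preimage:
  assumes "p permutes {..<N}" "S \<subseteq> J N W"
  shows "card {c\<in>J N W. permute_list p c \<in> S} = card S"
proof -
  have "bij_betw (permute_list p) {c\<in>J N W. permute_list p c \<in> S} S"
  proof (rule bij_betw_byWitness[where f' = "permute_list (inv p)"])
    show "\<forall>c\<in>{c\<in>J N W. permute_list p c \<in> S}. permute_list (inv p) (permute_list p c) = c"
      using assms(1) by (auto simp: J_def permute_list_inv_cancel)
    show "\<forall>s\<in>S. permute_list p (permute_list (inv p) s) = s"
      using assms by (auto simp: J_def permute_list_cancel_inv)
    show "permute_list (inv p) ` S \<subseteq> {c\<in>J N W. permute_list p c \<in> S}"
      using assms permute_list_in_J[OF permutes_inv[OF assms(1)]] by (auto simp: permute_list_cancel_inv J_def)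
  qed auto
  then show ?thesis by (rule bij_betw_same_card)
qed

lemma exists_permutation_above_average:
  assumes S: "S \<subseteq> J N W" and C: "C \<subseteq> J N W"
  obtains p where "p permutes {..<N}"
    "card C * card S \<le> card {c\<in>C. permute_list p c \<in> S} * card (J N W)"
proof (cases "C = {}")
  case True
  then show thesis using that permutes_id by fastforce
next
  case False
  then obtain c0 where c0: "c0 \<in> J N W" using C by blast
  define G where "G = {p. p permutes {..<N}}"
  define K where "K = card {p\<in>G. permute_list p c0 \<in> S}"
  have fin_G: "finite G" unfolding G_def by (simp add: finite_permutations)
  have hits: "card {p\<in>G. permute_list p c \<in> S} = K" if "c \<in> J N W" for c
    using card_permutations_hitting_le[OF that c0, of S] card_permutations_hitting_le[OF c0 that, of S]
    by (simp add: K_def G_def)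
  have "card G * card S = (\<Sum>p\<in>G. card {c\<in>J N W. permute_list p c \<in> S})"
    using card_permute_list_preimage[OF _ S] by (simp add: G_def)
  also have "\<dots> = (\<Sum>c\<in>J N W. card {p\<in>G. permute_list p c \<in> S})"
    using fin_G finite_J by (rule sum_card_filter_swap)
  also have "\<dots> = card (J N W) * K"
    by (simp add: hits)
  finally have card_G: "card G * card S = card (J N W) * K" .
  have fin_C: "finite C" using C finite_J by (rule finite_subset)
  have "(\<Sum>p\<in>G. card {c\<in>C. permute_list p c \<in> S} * card (J N W))
      = (\<Sum>p\<in>G. card {c\<in>C. permute_list p c \<in> S}) * card (J N W)"
    by (rule sum_distrib_right[symmetric])
  also have "(\<Sum>p\<in>G. card {c\<in>C. permute_list p c \<in> S})
      = (\<Sum>c\<in>C. card {p\<in>G. permute_list p c \<in> S})"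
    using fin_G fin_C by (rule sum_card_filter_swap)
  also have "\<dots> = card C * K"
    using C hits by (simp add: subset_iff)
  finally have sum_eq: "(\<Sum>p\<in>G. card {c\<in>C. permute_list p c \<in> S} * card (J N W))
      = (\<Sum>p\<in>G. card C * card S)"
    using card_G by (simp add: algebra_simps)
  have "\<exists>p\<in>G. card C * card S \<le> card {c\<in>C. permute_list p c \<in> S} * card (J N W)"
  proof (rule ccontr)
    assume "\<not> ?thesis"
    moreover have "id \<in> G" by (simp add: G_def)
    ultimately have "(\<Sum>p\<in>G. card {c\<in>C. permute_list p c \<in> S} * card (J N W))
        < (\<Sum>p\<in>G. card C * card S)"
      using fin_G by (intro sum_strict_mono) auto
    then show False using sum_eq by simp
  qed
  then show thesis using that by (auto simp: G_def)
qed

section \<open>Codes in J(m,w)^n from codes in J(mn,nw)\<close>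

lemma Jpow_eq_lists: "Jpow m w n = {M. set M \<subseteq> J m w \<and> length M = n}"
  by (auto simp: Jpow_def)

lemma finite_Jpow: "finite (Jpow m w n)"
  unfolding Jpow_eq_lists by (rule finite_lists_length_eq[OF finite_J])

lemma card_Jpow: "card (Jpow m w n) = card (J m w) ^ n"
  unfolding Jpow_eq_lists by (rule card_lists_length_eq[OF finite_J])

lemma concat_in_J:
  assumes "\<forall>c\<in>set M. c \<in> J m w"
  shows "concat M \<in> J (length M * m) (length M * w)"
  using assms by (induction M) (auto simp: J_def hweight_def)

lemma concat_Jpow_in_J: "M \<in> Jpow m w n \<Longrightarrow> concat M \<in> J (m * n) (n * w)"
  using concat_in_J[of M m w] by (simp add: Jpow_def mult.commute)

lemma inj_on_concat_Jpow: "inj_on concat (Jpow m w n)"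
proof (rule inj_onI)
  fix M M' assume M: "M \<in> Jpow m w n" and M': "M' \<in> Jpow m w n" and "concat M = concat M'"
  moreover have "\<forall>(x, y) \<in> set (zip M M'). length x = length y"
    using M M' by (fastforce simp: Jpow_def J_def dest: set_zip_leftD set_zip_rightD)
  ultimately show "M = M'"
    by (simp add: Jpow_def concat_eq_concat_iff)
qed

lemma mdist_eq_hdist_concat:
  assumes "length M' = length M" "\<forall>c\<in>set M. length c = m" "\<forall>c\<in>set M'. length c = m"
  shows "mdist M M' = hdist (concat M) (concat M')"
  using assms
proof (induction M arbitrary: M')
  case Nil
  then show ?case by (simp add: mdist_def hdist_def)
next
  case (Cons c M)
  then obtain c' M'' where M': "M' = c' # M''" by (cases M') auto
  have "mdist (c # M) (c' # M'') = hdist c c' + mdist M M''"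
    by (simp add: mdist_def sum.lessThan_Suc_shift del: sum.lessThan_Suc)
  with Cons M' show ?case by (simp add: hdist_def)
qed

lemma B_attained:
  assumes "W \<le> N"
  obtains C where "C \<subseteq> J N W" "\<forall>x\<in>C. \<forall>y\<in>C. x \<noteq> y \<longrightarrow> 2 * d \<le> hdist x y"
    "card C = B N W d"
proof -
  define P where "P C \<longleftrightarrow> C \<subseteq> J N W \<and> C \<noteq> {} \<and> (\<forall>x\<in>C. \<forall>y\<in>C. x \<noteq> y \<longrightarrow> 2 * d \<le> hdist x y)"
    for C
  have "finite {card C | C. P C}"
    by (rule finite_subset[where B = "card ` Pow (J N W)"]) (auto simp: P_def finite_J)
  moreover have "P {replicate W True @ replicate (N - W) False}"
    using assms by (simp add: P_def J_def hweight_def)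
  ultimately have "B N W d \<in> {card C | C. P C}"
    unfolding B_def P_def[abs_def] by (intro Max_in) auto
  then obtain C where "P C" "card C = B N W d" by auto
  then show thesis using that unfolding P_def by blast
qed

lemma card_le_A:
  assumes "C \<subseteq> Jpow m w n" "C \<noteq> {}" "\<forall>x\<in>C. \<forall>y\<in>C. x \<noteq> y \<longrightarrow> 2 * d \<le> mdist x y"
  shows "card C \<le> A m n w d"
  unfolding A_def
proof (rule Max_ge)
  show "finite {card C | C. C \<subseteq> Jpow m w n \<and> C \<noteq> {} \<and>
      (\<forall>x\<in>C. \<forall>y\<in>C. x \<noteq> y \<longrightarrow> 2 * d \<le> mdist x y)}"
    by (rule finite_subset[where B = "card ` Pow (Jpow m w n)"]) (auto simp: finite_Jpow)
qed (use assms in blast)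

lemma card_code_meeting_concat_le_A:
  assumes p: "p permutes {..<m * n}" and C: "C \<subseteq> J (m * n) (n * w)"
    and dist: "\<forall>x\<in>C. \<forall>y\<in>C. x \<noteq> y \<longrightarrow> 2 * d \<le> hdist x y"
  shows "card {c\<in>C. permute_list p c \<in> concat ` Jpow m w n} \<le> A m n w d"
proof -
  define Cp where "Cp = {c\<in>C. permute_list p c \<in> concat ` Jpow m w n}"
  define Q where "Q = {M\<in>Jpow m w n. concat M \<in> permute_list p ` Cp}"
  have len: "length c = m * n" if "c \<in> C" for c
    using that C by (auto simp: J_def)
  have "card Q = card (concat ` Q)"
    using inj_on_concat_Jpow by (rule card_image[symmetric, OF inj_on_subset]) (auto simp: Q_def)
  also have "concat ` Q = permute_list p ` Cp"
  proof
    show "permute_list p ` Cp \<subseteq> concat ` Q"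
    proof
      fix x assume x: "x \<in> permute_list p ` Cp"
      then obtain M where "M \<in> Jpow m w n" "x = concat M" by (auto simp: Cp_def)
      with x show "x \<in> concat ` Q" by (auto simp: Q_def)
    qed
  qed (auto simp: Q_def)
  also have "card \<dots> = card Cp"
    using inj_on_permute_list[OF p] len
    by (intro card_image) (auto simp: Cp_def intro: inj_on_subset)
  finally have card_Q: "card Q = card Cp" .
  have dist_Q: "2 * d \<le> mdist M M'" if MM': "M \<in> Q" "M' \<in> Q" "M \<noteq> M'" for M M'
  proof -
    obtain c c' where c: "c \<in> C" "concat M = permute_list p c"
      and c': "c' \<in> C" "concat M' = permute_list p c'"
      using MM'(1,2) by (auto simp: Q_def Cp_def)
    have MJ: "M \<in> Jpow m w n" "M' \<in> Jpow m w n" using MM'(1,2) by (auto simp: Q_def)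
    then have "concat M \<noteq> concat M'"
      using MM'(3) inj_on_concat_Jpow by (auto dest: inj_onD)
    then have "c \<noteq> c'" using c c' by auto
    have "mdist M M' = hdist (concat M) (concat M')"
      using MJ by (intro mdist_eq_hdist_concat[where m = m]) (auto simp: Jpow_def J_def)
    also have "\<dots> = hdist c c'"
      using c c' p len by (simp add: hdist_permute_list)
    finally show ?thesis using dist c c' \<open>c \<noteq> c'\<close> by simp
  qed
  have "card Q \<le> A m n w d"
  proof (cases "Q = {}")
    case False
    then show ?thesis using dist_Q by (intro card_le_A) (auto simp: Q_def)
  qed simp
  then show ?thesis using card_Q by (simp add: Cp_def)
qed

lemma B_binomial_pow_le_A_binomial:
  assumes "w \<le> m"
  shows "B (m * n) (n * w) d * (m choose w) ^ n \<le> A m n w d * (m * n choose (n * w))"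
proof -
  let ?N = "m * n" and ?W = "n * w" and ?S = "concat ` Jpow m w n"
  obtain C where C: "C \<subseteq> J ?N ?W" "\<forall>x\<in>C. \<forall>y\<in>C. x \<noteq> y \<longrightarrow> 2 * d \<le> hdist x y"
    "card C = B ?N ?W d"
    using B_attained[of ?W ?N] assms by (auto simp: mult.commute)
  have "?S \<subseteq> J ?N ?W" by (auto intro: concat_Jpow_in_J)
  then obtain p where p: "p permutes {..<?N}"
    "card C * card ?S \<le> card {c\<in>C. permute_list p c \<in> ?S} * card (J ?N ?W)"
    using exists_permutation_above_average C(1) by blast
  have "card ?S = (m choose w) ^ n"
    by (simp add: card_image[OF inj_on_concat_Jpow] card_Jpow card_J)
  then have "B ?N ?W d * (m choose w) ^ n \<le> card {c\<in>C. permute_list p c \<in> ?S} * (?N choose ?W)"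
    using p(2) C(3) by (simp add: card_J)
  also have "\<dots> \<le> A m n w d * (?N choose ?W)"
    using card_code_meeting_concat_le_A[OF p(1) C(1,2)] by simp
  finally show ?thesis .
qed

section \<open>Stirling bounds for the ratio of binomial coefficients\<close>

lemma ln_1_plus_sub_ln_1_minus_ge:
  fixes x :: real
  assumes "0 \<le> x" "x < 1"
  shows "2 * x + 2/3 * x ^ 3 \<le> ln (1 + x) - ln (1 - x)"
proof -
  let ?f = "\<lambda>t::real. ln (1 + t) - ln (1 - t) - 2 * t - 2/3 * t ^ 3"
  have "?f 0 \<le> ?f x"
  proof (rule DERIV_nonneg_imp_nondecreasing[OF assms(1)])
    fix t :: real
    assume t: "0 \<le> t" "t \<le> x"
    then have "t\<^sup>2 < 1" using assms by (simp add: power_less_one_iff abs_less_iff)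
    then have "DERIV ?f t :> 2 * t ^ 4 / (1 - t\<^sup>2)"
      using t assms
      by (auto intro!: derivative_eq_intros simp: field_simps power2_eq_square power4_eq_xxxx)
    moreover have "0 \<le> 2 * t ^ 4 / (1 - t\<^sup>2)" using \<open>t\<^sup>2 < 1\<close> by simp
    ultimately show "\<exists>y. DERIV ?f t :> y \<and> 0 \<le> y" by blast
  qed
  then show ?thesis by simp
qed

lemma ln_1_plus_sub_ln_1_minus_le:
  fixes x :: real
  assumes "0 \<le> x" "x < 1"
  shows "ln (1 + x) - ln (1 - x) \<le> 2 * x + 2/3 * x ^ 3 / (1 - x\<^sup>2)"
proof -
  let ?f = "\<lambda>t::real. 2 * t + 2/3 * t ^ 3 / (1 - t\<^sup>2) - (ln (1 + t) - ln (1 - t))"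
  have "?f 0 \<le> ?f x"
  proof (rule DERIV_nonneg_imp_nondecreasing[OF assms(1)])
    fix t :: real
    assume t: "0 \<le> t" "t \<le> x"
    then have "t\<^sup>2 < 1" using assms by (simp add: power_less_one_iff abs_less_iff)
    then have "1 - t\<^sup>2 \<noteq> 0" by simp
    then have "DERIV ?f t :> 4 * t ^ 4 / (3 * (1 - t\<^sup>2)\<^sup>2)"
      using t assms by (auto intro!: derivative_eq_intros) (simp add: divide_simps, algebra)
    moreover have "0 \<le> 4 * t ^ 4 / (3 * (1 - t\<^sup>2)\<^sup>2)" by simp
    ultimately show "\<exists>y. DERIV ?f t :> y \<and> 0 \<le> y" by blast
  qed
  then show ?thesis by simp
qed

definition stirling_remainder :: "nat \<Rightarrow> real" where
  "stirling_remainder k = ln (fact k) - (real k + 1/2) * ln (real k) + real k"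

lemma ln_fact_eq_stirling:
  "ln (fact k) = (real k + 1/2) * ln (real k) - real k + stirling_remainder k"
  by (simp add: stirling_remainder_def)

lemma stirling_remainder_diff:
  assumes "1 \<le> k"
  defines "x \<equiv> 1 / (2 * real k + 1)"
  shows "stirling_remainder k - stirling_remainder (Suc k)
    = (real k + 1/2) * (ln (1 + x) - ln (1 - x)) - 1"
proof -
  have k: "1 \<le> real k" using assms by simp
  have "0 \<le> x" "x < 1" using k by (auto simp: x_def)
  then have "0 < 1 + x" "0 < 1 - x" by linarith+
  then have "ln (1 + x) - ln (1 - x) = ln ((1 + x) / (1 - x))"
    by (simp add: ln_div)
  also have "(1 + x) / (1 - x) = (real k + 1) / real k"
    using k by (simp add: x_def divide_simps)
  also have "ln \<dots> = ln (real k + 1) - ln (real k)"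
    using k by (simp add: ln_div)
  finally have ln_ratio: "ln (1 + x) - ln (1 - x) = ln (real k + 1) - ln (real k)" .
  have "ln (fact (Suc k) :: real) = ln (real k + 1) + ln (fact k)"
    by (simp add: ln_mult add.commute)
  then show ?thesis
    unfolding ln_ratio stirling_remainder_def by (simp add: algebra_simps)
qed

lemma stirling_remainder_Suc_le:
  assumes "1 \<le> k"
  shows "stirling_remainder (Suc k) \<le> stirling_remainder k"
proof -
  define x where "x = 1 / (2 * real k + 1)"
  have x: "0 \<le> x" "x < 1" "(real k + 1/2) * (2 * x) = 1"
    using assms by (auto simp: x_def field_simps)
  have "2 * x \<le> ln (1 + x) - ln (1 - x)"
    using ln_1_plus_sub_ln_1_minus_ge[OF x(1,2)] zero_le_power[OF x(1), of 3] by linarith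
  then have "(real k + 1/2) * (2 * x) \<le> (real k + 1/2) * (ln (1 + x) - ln (1 - x))"
    by (intro mult_left_mono) auto
  then show ?thesis
    using stirling_remainder_diff[OF assms, folded x_def] x(3) by linarith
qed

lemma stirling_remainder_Suc_ge:
  assumes "1 \<le> k"
  shows "stirling_remainder k - 1 / (12 * real k)
    \<le> stirling_remainder (Suc k) - 1 / (12 * real (Suc k))"
proof -
  define x where "x = 1 / (2 * real k + 1)"
  have k: "1 \<le> real k" using assms by simp
  have x: "0 < x" "x < 1" using k by (auto simp: x_def)
  have half: "(real k + 1/2) * (2 * x) = 1" using k by (simp add: x_def field_simps)
  then have "1 - x\<^sup>2 = 4 * real k * (real k + 1) * x\<^sup>2" by algebra
  then have cubic: "2/3 * x ^ 3 / (1 - x\<^sup>2) = 2 * x / (12 * real k * (real k + 1))"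
    using k x by (simp add: power2_eq_square power3_eq_cube)
  have "(real k + 1/2) * (ln (1 + x) - ln (1 - x))
      \<le> (real k + 1/2) * (2 * x + 2/3 * x ^ 3 / (1 - x\<^sup>2))"
    using ln_1_plus_sub_ln_1_minus_le x k by (intro mult_left_mono) auto
  also have "\<dots> = (real k + 1/2) * (2 * x) * (1 + 1 / (12 * real k * (real k + 1)))"
    unfolding cubic by (simp add: algebra_simps)
  also have "\<dots> = 1 + 1 / (12 * real k) - 1 / (12 * real (Suc k))"
    using k unfolding half by (simp add: divide_simps) (simp add: algebra_simps)
  finally show ?thesis
    using stirling_remainder_diff[OF assms, folded x_def] by linarith
qed

lemma stirling_remainder_antimono:
  assumes "1 \<le> i" "i \<le> j"
  shows "stirling_remainder j \<le> stirling_remainder i"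
  using assms(2)
proof (induction j rule: dec_induct)
  case (step j)
  then show ?case using stirling_remainder_Suc_le[of j] assms(1) by linarith
qed simp

lemma stirling_remainder_le_add:
  assumes "1 \<le> i" "i \<le> j"
  shows "stirling_remainder i \<le> stirling_remainder j + 1 / (12 * real i)"
proof -
  have "stirling_remainder i - 1 / (12 * real i) \<le> stirling_remainder j - 1 / (12 * real j)"
    using assms(2)
  proof (induction j rule: dec_induct)
    case (step j)
    then show ?case using stirling_remainder_Suc_ge[of j] assms(1) by linarith
  qed simp
  moreover have "0 \<le> 1 / (12 * real j)" by simp
  ultimately show ?thesis by linarith
qed

lemma ln_2_ge: "56/81 \<le> ln (2::real)"
proof -
  have "2 * (1/3) + 2/3 * (1/3) ^ 3 \<le> ln (1 + 1/3) - ln (1 - 1/3 :: real)"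
    by (rule ln_1_plus_sub_ln_1_minus_ge) auto
  also have "ln (1 + 1/3) - ln (1 - 1/3 :: real) = ln 2"
    using ln_div[of "4/3" "2/3 :: real"] by simp
  finally show ?thesis by (simp add: power_divide)
qed

lemma ln_3_sub_ln_2_le: "ln 3 - ln (2::real) \<le> 73/180"
proof -
  have "ln 3 - ln (2::real) = ln (1 + 1/5) - ln (1 - 1/5)"
    using ln_div[of 3 "2 :: real"] ln_div[of "6/5" "4/5 :: real"] by simp
  also have "\<dots> \<le> 2 * (1/5) + 2/3 * (1/5) ^ 3 / (1 - (1/5)\<^sup>2)"
    by (rule ln_1_plus_sub_ln_1_minus_le) auto
  finally show ?thesis by (simp add: power_divide power2_eq_square)
qed

lemma stirling_remainder_4_le: "stirling_remainder 4 \<le> 3/2 * ln 2 - 1/12"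
proof -
  have "ln (fact 4 :: real) = ln 3 + 3 * ln 2"
    using ln_mult_pos[of 3 "8 :: real"] ln_realpow[of "2 :: real" 3] by (simp add: fact_numeral)
  moreover have "ln (4::real) = 2 * ln 2"
    using ln_realpow[of 2 2] by simp
  ultimately have "stirling_remainder 4 = ln 3 - 6 * ln 2 + 4"
    by (simp add: stirling_remainder_def)
  then show ?thesis using ln_2_ge ln_3_sub_ln_2_le by linarith
qed

lemma ln_binomial_eq_stirling:
  assumes "0 < a" "0 < b"
  shows "ln (real (a + b choose a)) =
    (real a + real b + 1/2) * ln (real a + real b) - (real a + 1/2) * ln (real a)
      - (real b + 1/2) * ln (real b)
      + stirling_remainder (a + b) - stirling_remainder a - stirling_remainder b"
proof -
  have "real (a + b choose a) = fact (a + b) / (fact a * fact b)"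
    using binomial_fact[of a "a + b"] by simp
  then show ?thesis
    using ln_fact_eq_stirling[of "a + b"] ln_fact_eq_stirling[of a] ln_fact_eq_stirling[of b]
    by (simp add: ln_div ln_mult)
qed

lemma stirling_remainder_combination_ge:
  fixes n w b :: nat
  assumes "1 \<le> n" "1 \<le> w" "1 \<le> b"
  defines "g \<equiv> stirling_remainder (n * w + n * b)"
  shows "- (real n - 1) * g - real n / (12 * real w) - real n / (12 * real b)
    \<le> real n * (stirling_remainder (w + b) - stirling_remainder w - stirling_remainder b)
      - g + stirling_remainder (n * w) + stirling_remainder (n * b)"
proof -
  have "w + b \<le> n * w + n * b"
    using mult_le_mono1[OF assms(1), of "w + b"] by (simp add: add_mult_distrib2)
  then have le: "w + b \<le> n * w + n * b" "w \<le> n * w + n * b" "b \<le> n * w + n * b"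
      "n * w \<le> n * w + n * b" "n * b \<le> n * w + n * b"
    by linarith+
  have "g \<le> stirling_remainder (w + b)" "g \<le> stirling_remainder (n * w)"
    "g \<le> stirling_remainder (n * b)"
    unfolding g_def using assms(1-3) le by (auto intro!: stirling_remainder_antimono)
  moreover have "stirling_remainder w \<le> g + 1 / (12 * real w)"
    "stirling_remainder b \<le> g + 1 / (12 * real b)"
    unfolding g_def using assms(2,3) le by (auto intro!: stirling_remainder_le_add)
  ultimately have "real n * (- g - 1 / (12 * real w) - 1 / (12 * real b))
      \<le> real n * (stirling_remainder (w + b) - stirling_remainder w - stirling_remainder b)"
    by (intro mult_left_mono) auto
  with \<open>g \<le> stirling_remainder (n * w)\<close> \<open>g \<le> stirling_remainder (n * b)\<close> show ?thesis
    by (simp add: algebra_simps)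
qed

lemma inverse_12_le_half_ln_ratio:
  assumes "1 \<le> w" "1 \<le> b"
  shows "1 / (12 * real b) \<le> (ln (real w + real b) - ln (real b)) / 2"
proof -
  obtain q where q: "q = real w / (real w + real b)" by simp
  have pos: "0 < real w" "0 < real b" using assms by auto
  have "ln (real b) - ln (real w + real b) \<le> real b / (real w + real b) - 1"
    using ln_le_minus_one[of "real b / (real w + real b)"] pos by (simp add: ln_div)
  also have "\<dots> = - q"
    using pos by (simp add: q field_simps)
  finally have "q \<le> ln (real w + real b) - ln (real b)" by linarith
  moreover have "1 / (12 * real b) \<le> q / 2"
  proof -
    have prod: "real w \<le> real w * real b" "real b \<le> real w * real b"
      using assms by (simp_all add: mult_le_cancel_left1 mult_le_cancel_right1)
    show ?thesis using pos by (simp add: q divide_simps) (use prod in linarith)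
  qed
  ultimately show ?thesis unfolding diff_divide_distrib by linarith
qed

lemma ln_binomial_pow_ratio_eq:
  fixes n w b :: nat
  assumes "1 \<le> n" "1 \<le> w" "1 \<le> b"
  shows "real n * ln (real (w + b choose w)) - ln (real (n * w + n * b choose (n * w)))
    = (real n - 1) / 2 * (ln (real w + real b) - ln (real w) - ln (real b)) + ln (real n) / 2
      + (real n * (stirling_remainder (w + b) - stirling_remainder w - stirling_remainder b)
        - stirling_remainder (n * w + n * b) + stirling_remainder (n * w) + stirling_remainder (n * b))"
proof -
  have pos: "0 < w" "0 < b" "0 < n * w" "0 < n * b" using assms by auto
  have "ln (real (n * w)) = ln (real n) + ln (real w)"
    "ln (real (n * b)) = ln (real n) + ln (real b)"
    "ln (real (n * w) + real (n * b)) = ln (real n) + ln (real w + real b)"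
    using pos by (simp_all add: ln_mult flip: distrib_left)
  then show ?thesis
    unfolding ln_binomial_eq_stirling[OF pos(1,2)] ln_binomial_eq_stirling[OF pos(3,4)]
    by (simp add: algebra_simps add_divide_distrib diff_divide_distrib)
qed

lemma ln_pi_le: "ln pi \<le> 2 * ln 2"
proof -
  have "ln pi \<le> ln 4"
    using pi_less_4 pi_gt_zero by simp
  then show ?thesis
    using ln_realpow[of 2 2, simplified] by linarith
qed

lemma ln_binomial_pow_ratio_ge:
  fixes n w b :: nat
  assumes n: "1 \<le> n" and w: "1 \<le> w" and b: "1 \<le> b"
  shows "(ln pi + ln (real w) + ln (real n)) / 2 - real n / 2 * (3 * ln 2 + ln (real w))
    \<le> real n * ln (real (w + b choose w)) - ln (real (n * w + n * b choose (n * w)))"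
proof -
  define g where "g = stirling_remainder (n * w + n * b)"
  define iw where "iw = 1 / (12 * real w)"
  define ib where "ib = 1 / (12 * real b)"
  have iw: "iw \<le> 1/12" and ib: "ib \<le> 1/12"
    using w b by (simp_all add: iw_def ib_def)
  have rest: "0 \<le> 3/2 * ln 2 - ln pi / 2 - iw - ib"
    using ln_pi_le iw ib ln_2_ge by linarith
  have main: "0 \<le> (real n - 1) * ((ln (real w + real b) - ln (real b)) / 2 + 3/2 * ln 2 - g - iw - ib)"
  proof (cases "n = 1")
    case False
    then have "4 \<le> n * w + n * b"
      using n w b mult_le_mono[of 2 n 1 w] mult_le_mono[of 2 n 1 b] by linarith
    then have "g \<le> 3/2 * ln 2 - 1/12"
      unfolding g_def using stirling_remainder_antimono[of 4] stirling_remainder_4_le by force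
    then have "0 \<le> (ln (real w + real b) - ln (real b)) / 2 + 3/2 * ln 2 - g - iw - ib"
      using inverse_12_le_half_ln_ratio[OF w b] iw unfolding ib_def by linarith
    then show ?thesis using n by simp
  qed simp
  have comb: "- (real n - 1) * g - real n * iw - real n * ib
      \<le> real n * (stirling_remainder (w + b) - stirling_remainder w - stirling_remainder b)
        - g + stirling_remainder (n * w) + stirling_remainder (n * b)"
    using stirling_remainder_combination_ge[OF n w b] by (simp add: g_def iw_def ib_def)
  have "real n * ln (real (w + b choose w)) - ln (real (n * w + n * b choose (n * w)))
      - ((ln pi + ln (real w) + ln (real n)) / 2 - real n / 2 * (3 * ln 2 + ln (real w)))
    = (real n - 1) * ((ln (real w + real b) - ln (real b)) / 2 + 3/2 * ln 2 - g - iw - ib)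
      + (3/2 * ln 2 - ln pi / 2 - iw - ib)
      + ((real n * (stirling_remainder (w + b) - stirling_remainder w - stirling_remainder b)
          - g + stirling_remainder (n * w) + stirling_remainder (n * b))
        - (- (real n - 1) * g - real n * iw - real n * ib))"
    unfolding ln_binomial_pow_ratio_eq[OF n w b] g_def by (simp add: field_simps)
  with main rest comb show ?thesis by linarith
qed

lemma binomial_pow_ratio_ge:
  fixes m n w :: nat
  assumes "0 < n" "0 < w" "w < m"
  shows "sqrt (pi * real w * real n) * 2 powr (- (real n / 2) * (3 + log 2 (real w)))
    \<le> real ((m choose w) ^ n) / real (m * n choose (n * w))"
proof -
  define b where "b = m - w"
  have m: "m = w + b" and b: "1 \<le> b" using assms by (auto simp: b_def)
  have mn: "m * n = n * w + n * b" by (simp add: m algebra_simps)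
  have pos: "0 < real (m choose w)" "0 < real (m * n choose (n * w))"
    using assms by (simp_all add: mn)
  have "ln (sqrt (pi * real w * real n) * 2 powr (- (real n / 2) * (3 + log 2 (real w))))
      = (ln pi + ln (real w) + ln (real n)) / 2 - real n / 2 * (3 * ln 2 + ln (real w))"
    using assms by (simp add: ln_mult ln_sqrt log_def field_simps)
  also have "\<dots> \<le> real n * ln (real (m choose w)) - ln (real (m * n choose (n * w)))"
    using ln_binomial_pow_ratio_ge[of n w b] assms b unfolding mn by (simp add: m)
  also have "\<dots> = ln (real ((m choose w) ^ n) / real (m * n choose (n * w)))"
    using pos by (simp add: ln_div ln_realpow)
  finally show ?thesis
    using pos assms by simp
qed

theorem corollary2:
  fixes m n w d :: nat
  assumes "m > 0" "n > 0" "w > 0" "d > 0" "2 * w \<le> m"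
  shows "real (A m n w d) \<ge>
    sqrt (pi * real w * real n) * 2 powr (- (real n / 2) * (3 + log 2 (real w))) * real (B (m * n) (n * w) d)"
proof -
  have "w \<le> m" "w < m" using assms(3,5) by simp_all
  have "B (m * n) (n * w) d * (m choose w) ^ n \<le> A m n w d * (m * n choose (n * w))"
    using B_binomial_pow_le_A_binomial[OF \<open>w \<le> m\<close>] .
  then have "real (B (m * n) (n * w) d) * real ((m choose w) ^ n)
      \<le> real (A m n w d) * real (m * n choose (n * w))"
    by (metis of_nat_le_iff of_nat_mult)
  moreover have "0 < real (m * n choose (n * w))"
    using \<open>w \<le> m\<close> by (simp add: mult.commute)
  ultimately have "real ((m choose w) ^ n) / real (m * n choose (n * w)) * real (B (m * n) (n * w) d)
      \<le> real (A m n w d)"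
    by (simp add: field_simps)
  with binomial_pow_ratio_ge[OF assms(2,3) \<open>w < m\<close>] show ?thesis
    by (meson mult_right_mono of_nat_0_le_iff order_trans)
qed

end
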